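(* Assume the Continuum Hypothesis. Then every productively Lindelöf co-analytic space which is nowhere locally compact is $\sigma$-compact.
   Context: All spaces are completely regular. A space $X$ is productively Lindelöf if $X\times Y$ is Lindelöf for every Lindelöf space $Y$. A space is analytic if it is a continuous image of the space $\mathbb{P}$ of irrationals; $X$ is co-analytic if $\beta X\setminus X$ is analytic. $X$ is nowhere locally compact if no point of $X$ has a compact neighbourhood. *)

theory Defs
  imports "HOL-Analysis.Analysis" "HOL-Library.Equipollence"
begin

definition CH :: bool where
  "CH \<longleftrightarrow> (\<forall>A :: real set. countable A \<or> A \<approx> (UNIV :: real set))"

definition tychonoff_space :: "'a topology \<Rightarrow> bool" where
  "tychonoff_space X \<longleftrightarrow> completely_regular_space X \<and> Hausdorff_space X"

text \<open>HOL cannot quantify over all types inside a formula, so Y ranges over all spaces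
  on the (very large) type (a => real) set.\<close>
definition productively_Lindelof :: "'a topology \<Rightarrow> bool" where
  "productively_Lindelof X \<longleftrightarrow>
     (\<forall>Y :: ('a \<Rightarrow> real) set topology.
        tychonoff_space Y \<and> Lindelof_space Y \<longrightarrow> Lindelof_space (prod_topology X Y))"

definition irrationals_space :: "real topology" where
  "irrationals_space = top_of_set (- \<rat>)"

definition analytic_space :: "'b topology \<Rightarrow> bool" where
  "analytic_space Z \<longleftrightarrow>
     (\<exists>g. continuous_map irrationals_space Z g \<and> g ` topspace irrationals_space = topspace Z)"

text \<open>Stone-Cech compactification, realised concretely as the closure of the evaluation
  embedding of X into the Tychonoff cube [0,1]^C(X,[0,1]).\<close>
definition cube_index :: "'a topology \<Rightarrow> ('a \<Rightarrow> real) set" where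
  "cube_index X = {f. continuous_map X (top_of_set {0..1}) f \<and> f \<in> extensional (topspace X)}"

definition tychonoff_cube :: "'a topology \<Rightarrow> (('a \<Rightarrow> real) \<Rightarrow> real) topology" where
  "tychonoff_cube X = product_topology (\<lambda>_. top_of_set {0..1}) (cube_index X)"

definition evaluation_map :: "'a topology \<Rightarrow> 'a \<Rightarrow> (('a \<Rightarrow> real) \<Rightarrow> real)" where
  "evaluation_map X x = restrict (\<lambda>f. f x) (cube_index X)"

definition stone_cech :: "'a topology \<Rightarrow> (('a \<Rightarrow> real) \<Rightarrow> real) topology" where
  "stone_cech X = subtopology (tychonoff_cube X)
      (tychonoff_cube X closure_of (evaluation_map X ` topspace X))"

definition stone_cech_remainder :: "'a topology \<Rightarrow> (('a \<Rightarrow> real) \<Rightarrow> real) topology" where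
  "stone_cech_remainder X = subtopology (stone_cech X)
      (topspace (stone_cech X) - evaluation_map X ` topspace X)"

definition co_analytic_space :: "'a topology \<Rightarrow> bool" where
  "co_analytic_space X \<longleftrightarrow> analytic_space (stone_cech_remainder X)"

definition nowhere_locally_compact :: "'a topology \<Rightarrow> bool" where
  "nowhere_locally_compact X \<longleftrightarrow>
     (\<forall>x \<in> topspace X. \<not> (\<exists>U K. openin X U \<and> compactin X K \<and> x \<in> U \<and> U \<subseteq> K))"

definition sigma_compact_space :: "'a topology \<Rightarrow> bool" where
  "sigma_compact_space X \<longleftrightarrow>
     (\<exists>\<F>. countable \<F> \<and> (\<forall>K \<in> \<F>. compactin X K) \<and> \<Union>\<F> = topspace X)"

end

theory Submission
  imports Defs
begin

text \<open>Countably many functions \<open>f\<^sub>n : X \<rightarrow> [0,1]\<close> already separate \<open>X\<close> from its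
  Stone-Cech remainder: the remainder is a continuous image of the irrationals \<open>P\<close>, the product
  \<open>X \<times> P\<close> is Lindelof, and at each of its points some coordinate of the Tychonoff cube tells the
  two factors apart. Hence \<open>\<psi> = (f\<^sub>n)\<^sub>n : X \<rightarrow> [0,1]\<^sup>\<nat>\<close> pulls compact subsets of
  \<open>S = \<psi>(X)\<close> back to compact sets, and if \<open>X\<close> is not \<open>\<sigma>\<close>-compact, then \<open>S\<close> is not covered by
  countably many compact subsets of itself. Under CH a diagonal construction of length \<open>\<omega>\<^sub>1\<close>
  then gives an uncountable \<open>A \<subseteq> S\<close> concentrated on \<open>[0,1]\<^sup>\<nat> - S\<close>. In the Michael-type space
  on \<open>([0,1]\<^sup>\<nat> - S) \<union> A\<close> whose points in \<open>A\<close> are isolated, concentration gives the Lindelof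
  property, while in its product with \<open>X\<close> the closed graph of \<open>\<psi>\<close> can only be covered with
  all the uncountably many open sets \<open>X \<times> {a}\<close>, \<open>a \<in> A\<close>. So \<open>X\<close> is not productively
  Lindelof.\<close>

section \<open>Lindelof products\<close>

lemma homeomorphic_space_copy:
  fixes T :: "'b topology" and j :: "'b \<Rightarrow> 'c"
  assumes inj: "inj_on j (topspace T)"
  obtains T' :: "'c topology" where "T homeomorphic_space T'"
proof -
  define g where "g = inv_into (topspace T) j"
  define T' where "T' = pullback_topology (j ` topspace T) g T"
  have gj: "g (j x) = x" if "x \<in> topspace T" for x
    using inj that by (simp add: g_def)
  have top: "topspace T' = j ` topspace T"
    using gj by (auto simp: T'_def topspace_pullback_topology)
  have "continuous_map T' T g"
    using continuous_map_pullback[OF continuous_map_id, of "j ` topspace T" g] by (simp add: T'_def)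
  moreover have "continuous_map T T' j"
    unfolding T'_def
    by (rule continuous_map_pullback') (auto intro: continuous_map_eq[OF continuous_map_id] simp: gj)
  ultimately have "homeomorphic_maps T T' j g"
    by (auto simp: homeomorphic_maps_def top gj)
  then show ?thesis
    using that homeomorphic_space_def by blast
qed

lemma homeomorphic_Lindelof_space:
  "X homeomorphic_space Y \<Longrightarrow> Lindelof_space X \<longleftrightarrow> Lindelof_space Y"
  by (meson Lindelof_space_continuous_map_image homeomorphic_imp_continuous_map
      homeomorphic_imp_surjective_map homeomorphic_space homeomorphic_space_sym)

lemma productively_Lindelof_imp_Lindelof_prod:
  fixes X :: "'a topology" and Y :: "'b topology" and j :: "'b \<Rightarrow> ('a \<Rightarrow> real) set"
  assumes "productively_Lindelof X" "tychonoff_space Y" "Lindelof_space Y"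
    and "inj_on j (topspace Y)"
  shows "Lindelof_space (prod_topology X Y)"
proof -
  obtain Y' :: "('a \<Rightarrow> real) set topology" where hom: "Y homeomorphic_space Y'"
    using homeomorphic_space_copy[OF assms(4)] by blast
  then have "tychonoff_space Y'" "Lindelof_space Y'"
    using assms(2,3) homeomorphic_completely_regular_space homeomorphic_Hausdorff_space
      homeomorphic_Lindelof_space unfolding tychonoff_space_def by blast+
  then have "Lindelof_space (prod_topology X Y')"
    using assms(1) unfolding productively_Lindelof_def by blast
  moreover have "prod_topology X Y' homeomorphic_space prod_topology X Y"
    using hom homeomorphic_space_prod_topology homeomorphic_space_refl homeomorphic_space_sym
    by blast
  ultimately show ?thesis
    using homeomorphic_Lindelof_space by blast
qed

lemma Lindelof_prod_countable_separation:
  fixes u :: "'i \<Rightarrow> 'a \<Rightarrow> real" and v :: "'i \<Rightarrow> 'b \<Rightarrow> real"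
  assumes Lindelof: "Lindelof_space (prod_topology X Y)" and "I \<noteq> {}"
    and u: "\<And>i. i \<in> I \<Longrightarrow> continuous_map X euclideanreal (u i)"
    and v: "\<And>i. i \<in> I \<Longrightarrow> continuous_map Y euclideanreal (v i)"
    and sep: "\<And>x y. x \<in> topspace X \<Longrightarrow> y \<in> topspace Y \<Longrightarrow> \<exists>i\<in>I. u i x \<noteq> v i y"
  obtains s :: "nat \<Rightarrow> 'i" where "range s \<subseteq> I"
    "\<And>x y. x \<in> topspace X \<Longrightarrow> y \<in> topspace Y \<Longrightarrow> \<exists>n. u (s n) x \<noteq> v (s n) y"
proof -
  define P where "P = prod_topology X Y"
  \<comment> \<open>\<open>q\<close> lies strictly between the two values exactly when the product is negative\<close>
  define W where "W = (\<lambda>(i, q). {z \<in> topspace P. (u i (fst z) - q) * (v i (snd z) - q) \<in> {..<0}})"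
  have "openin P (W (i, q))" if "i \<in> I" for i q
  proof -
    have "continuous_map P euclideanreal (\<lambda>z. (u i (fst z) - q) * (v i (snd z) - q))"
      unfolding P_def using u[OF that] v[OF that]
      by (intro continuous_intros continuous_map_compose[OF continuous_map_fst, unfolded o_def]
          continuous_map_compose[OF continuous_map_snd, unfolded o_def])
    from openin_continuous_map_preimage[OF this, of "{..<0}"] show ?thesis
      by (simp add: W_def)
  qed
  moreover have "\<exists>i\<in>I. \<exists>q. z \<in> W (i, q)" if z: "z \<in> topspace P" for z
  proof -
    obtain i where i: "i \<in> I" "u i (fst z) \<noteq> v i (snd z)"
      using sep[of "fst z" "snd z"] z by (auto simp: P_def mem_Times_iff)
    define q where "q = (u i (fst z) + v i (snd z)) / 2"
    have "(u i (fst z) - q) * (v i (snd z) - q) = - ((u i (fst z) - v i (snd z)) / 2)\<^sup>2"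
      by (simp add: q_def power2_eq_square field_simps)
    also have "\<dots> < 0"
      using i(2) by simp
    finally show ?thesis
      using i(1) z by (auto simp: W_def)
  qed
  ultimately obtain \<V> where \<V>: "countable \<V>" "\<V> \<subseteq> W ` (I \<times> UNIV)" "\<Union>\<V> = topspace P"
    using Lindelof_spaceD[of P "W ` (I \<times> UNIV)"] Lindelof unfolding P_def W_def by fastforce
  then obtain J where J: "J \<subseteq> I \<times> UNIV" "countable J" "\<V> = W ` J"
    by (meson countable_subset_image)
  obtain i0 where "i0 \<in> I"
    using \<open>I \<noteq> {}\<close> by blast
  define s where "s = from_nat_into (insert i0 (fst ` J))"
  have range_s: "range s = insert i0 (fst ` J)"
    unfolding s_def using J(2) by (simp add: range_from_nat_into)
  show ?thesis
  proof
    show "range s \<subseteq> I"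
      using range_s J(1) \<open>i0 \<in> I\<close> by auto
    fix x y assume "x \<in> topspace X" "y \<in> topspace Y"
    then have "(x, y) \<in> \<Union>(W ` J)"
      using \<V>(3) J(3) by (simp add: P_def)
    then obtain i q where "(i, q) \<in> J" "(x, y) \<in> W (i, q)"
      by auto
    moreover obtain n where "s n = i"
      using range_s \<open>(i, q) \<in> J\<close> by (metis fst_conv image_eqI insertCI rangeE)
    ultimately have "u (s n) x \<noteq> v (s n) y"
      by (auto simp: W_def)
    then show "\<exists>n. u (s n) x \<noteq> v (s n) y" ..
  qed
qed

lemma tychonoff_space_irrationals: "tychonoff_space irrationals_space"
  unfolding tychonoff_space_def irrationals_space_def
  by (simp add: completely_regular_space_subtopology metrizable_imp_completely_regular_space
      metrizable_space_euclidean Hausdorff_space_subtopology)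

lemma Lindelof_space_top_of_set:
  "Lindelof_space (top_of_set (S :: 'b::second_countable_topology set))"
  unfolding Lindelof_space_def by (metis Lindelof_openin)

lemma Lindelof_space_irrationals: "Lindelof_space irrationals_space"
  by (simp add: irrationals_space_def Lindelof_space_top_of_set)

section \<open>Separating a co-analytic space from its remainder\<close>

lemma cube_index_eq_mspace:
  "cube_index X = mspace (submetric (cfunspace X euclidean_metric) {f. f \<in> topspace X \<rightarrow> {0..1::real}})"
proof -
  have "bounded (f ` topspace X)" if "f \<in> topspace X \<rightarrow> {0..1::real}" for f
    by (rule bounded_subset[OF bounded_closed_interval[of 0 1]]) (use that in auto)
  then show ?thesis
    by (auto simp: cube_index_def continuous_map_in_subtopology Pi_iff image_subset_iff)
qed

lemma cube_indexD:
  assumes "f \<in> cube_index X"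
  shows "continuous_map X euclideanreal f" "x \<in> topspace X \<Longrightarrow> f x \<in> {0..1}"
  using assms by (auto simp: cube_index_def continuous_map_in_subtopology)

lemma evaluation_map_apply [simp]: "f \<in> cube_index X \<Longrightarrow> evaluation_map X x f = f x"
  by (simp add: evaluation_map_def)

lemma topspace_tychonoff_cube: "topspace (tychonoff_cube X) = (\<Pi>\<^sub>E f\<in>cube_index X. {0..1})"
  by (simp add: tychonoff_cube_def)

lemma evaluation_map_in_tychonoff_cube:
  "x \<in> topspace X \<Longrightarrow> evaluation_map X x \<in> topspace (tychonoff_cube X)"
  using cube_indexD(2) by (fastforce simp: topspace_tychonoff_cube evaluation_map_def)

lemma continuous_map_tychonoff_cube_coordinate:
  assumes "f \<in> cube_index X"
  shows "continuous_map (tychonoff_cube X) euclideanreal (\<lambda>z. z f)"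
  using continuous_map_product_projection[OF assms, of "\<lambda>_. top_of_set {0..1::real}"]
  by (simp add: tychonoff_cube_def continuous_map_in_subtopology)

lemma embedding_map_evaluation_map:
  assumes "tychonoff_space X"
  shows "embedding_map X (tychonoff_cube X) (evaluation_map X)"
  using completely_regular_space_cube_embedding_explicit[of X] assms
  unfolding tychonoff_space_def tychonoff_cube_def evaluation_map_def cube_index_eq_mspace
  by blast

lemma topspace_stone_cech:
  "topspace (stone_cech X) = tychonoff_cube X closure_of (evaluation_map X ` topspace X)"
  by (simp add: stone_cech_def closure_of_subset_topspace inf.absorb2)

lemma compact_space_stone_cech: "compact_space (stone_cech X)"
  unfolding stone_cech_def
  by (intro compact_space_subtopology closedin_compact_space)
    (simp_all add: tychonoff_cube_def compact_space_product_topology compact_space_subtopology)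

lemma embedding_map_stone_cech:
  assumes "tychonoff_space X"
  shows "embedding_map X (stone_cech X) (evaluation_map X)"
  unfolding stone_cech_def embedding_map_in_subtopology
  by (auto intro!: closure_of_subset embedding_map_evaluation_map assms
      simp: evaluation_map_in_tychonoff_cube)

lemma topspace_stone_cech_remainder:
  "topspace (stone_cech_remainder X) = topspace (stone_cech X) - evaluation_map X ` topspace X"
  by (auto simp: stone_cech_remainder_def)

lemma topspace_stone_cech_subset: "topspace (stone_cech X) \<subseteq> topspace (tychonoff_cube X)"
  by (simp add: topspace_stone_cech closure_of_subset_topspace)

lemma stone_cech_remainder_separated:
  assumes "x \<in> topspace X" "z \<in> topspace (stone_cech_remainder X)"
  obtains f where "f \<in> cube_index X" "z f \<noteq> f x"
proof -
  have "z \<in> (\<Pi>\<^sub>E f\<in>cube_index X. {0..1})" "evaluation_map X x \<in> (\<Pi>\<^sub>E f\<in>cube_index X. {0..1})"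
    using assms topspace_stone_cech_subset[of X] evaluation_map_in_tychonoff_cube[OF assms(1)]
    unfolding topspace_stone_cech_remainder topspace_tychonoff_cube by blast+
  moreover have "z \<noteq> evaluation_map X x"
    using assms by (auto simp: topspace_stone_cech_remainder)
  ultimately obtain f where "f \<in> cube_index X" "z f \<noteq> evaluation_map X x f"
    using PiE_ext by blast
  then show ?thesis
    using that by simp
qed

lemma co_analytic_separating_sequence:
  fixes X :: "'a topology"
  assumes "productively_Lindelof X" "co_analytic_space X"
  obtains fs :: "nat \<Rightarrow> 'a \<Rightarrow> real" where "range fs \<subseteq> cube_index X"
    "\<And>x z. x \<in> topspace X \<Longrightarrow> z \<in> topspace (stone_cech_remainder X) \<Longrightarrow> \<exists>n. z (fs n) \<noteq> fs n x"
proof -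
  obtain g where g: "continuous_map irrationals_space (stone_cech_remainder X) g"
    "g ` topspace irrationals_space = topspace (stone_cech_remainder X)"
    using assms(2) unfolding co_analytic_space_def analytic_space_def by blast
  have "inj_on (\<lambda>r. {\<lambda>_::'a. r}) (topspace irrationals_space)"
    by (auto intro: inj_onI dest: fun_cong)
  then have Lindelof: "Lindelof_space (prod_topology X irrationals_space)"
    by (rule productively_Lindelof_imp_Lindelof_prod[OF assms(1) tychonoff_space_irrationals
          Lindelof_space_irrationals])
  have "continuous_map X (top_of_set {0..1}) (\<lambda>x\<in>topspace X. 0::real)"
    by (rule continuous_map_eq[of _ _ "\<lambda>_. 0"]) auto
  then have nonempty: "cube_index X \<noteq> {}"
    unfolding cube_index_def by blast
  have continuous: "continuous_map irrationals_space euclideanreal (\<lambda>p. g p f)"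
    if "f \<in> cube_index X" for f
  proof -
    have "continuous_map (stone_cech_remainder X) euclideanreal (\<lambda>z. z f)"
      using continuous_map_tychonoff_cube_coordinate[OF that]
      by (simp add: stone_cech_remainder_def stone_cech_def continuous_map_from_subtopology)
    from continuous_map_compose[OF g(1) this] show ?thesis
      by (simp add: o_def)
  qed
  have separated: "\<exists>f\<in>cube_index X. f x \<noteq> g p f"
    if x: "x \<in> topspace X" and p: "p \<in> topspace irrationals_space" for x p
  proof -
    have "g p \<in> topspace (stone_cech_remainder X)"
      using g(2) p by blast
    then obtain f where "f \<in> cube_index X" "g p f \<noteq> f x"
      using stone_cech_remainder_separated[OF x] by blast
    then show ?thesis
      by metis
  qed
  obtain fs :: "nat \<Rightarrow> 'a \<Rightarrow> real" where fs: "range fs \<subseteq> cube_index X"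
    "\<And>x p. x \<in> topspace X \<Longrightarrow> p \<in> topspace irrationals_space \<Longrightarrow> \<exists>n. fs n x \<noteq> g p (fs n)"
    using Lindelof_prod_countable_separation[where u = "\<lambda>f. f" and v = "\<lambda>f p. g p f",
        OF Lindelof nonempty cube_indexD(1) continuous separated]
    by blast
  show ?thesis
  proof (rule that[OF fs(1)])
    fix x z
    assume "x \<in> topspace X" "z \<in> topspace (stone_cech_remainder X)"
    moreover obtain p where "p \<in> topspace irrationals_space" "z = g p"
      using g(2) \<open>z \<in> topspace (stone_cech_remainder X)\<close> by blast
    ultimately show "\<exists>n. z (fs n) \<noteq> fs n x"
      using fs(2) by metis
  qed
qed

lemma compactin_preimage_through_compactification:
  assumes emb: "embedding_map X Z e" and "compact_space Z" and "Hausdorff_space T"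
    and Psi: "continuous_map Z T Psi" and Psi_e: "\<And>x. x \<in> topspace X \<Longrightarrow> Psi (e x) = psi x"
    and remainder: "\<And>z. z \<in> topspace Z - e ` topspace X \<Longrightarrow> Psi z \<notin> psi ` topspace X"
    and K: "compactin T K" "K \<subseteq> psi ` topspace X"
  shows "compactin X {x \<in> topspace X. psi x \<in> K}"
proof -
  define C where "C = {z \<in> topspace Z. Psi z \<in> K}"
  have hom: "homeomorphic_map X (subtopology Z (e ` topspace X)) e"
    using emb by (simp add: embedding_map_def)
  then have eX: "e ` topspace X \<subseteq> topspace Z"
    by (metis homeomorphic_imp_surjective_map inf_le1 topspace_subtopology)
  have "closedin Z C"
    unfolding C_def using closedin_continuous_map_preimage[OF Psi] K(1)
      compactin_imp_closedin[OF \<open>Hausdorff_space T\<close>] by blast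
  then have "compactin Z C"
    using \<open>compact_space Z\<close> closedin_compact_space by blast
  moreover have "C = e ` {x \<in> topspace X. psi x \<in> K}"
  proof
    show "C \<subseteq> e ` {x \<in> topspace X. psi x \<in> K}"
    proof
      fix z assume z: "z \<in> C"
      then have "z \<in> e ` topspace X"
        using remainder K(2) unfolding C_def by blast
      then show "z \<in> e ` {x \<in> topspace X. psi x \<in> K}"
        using z Psi_e by (auto simp: C_def)
    qed
    show "e ` {x \<in> topspace X. psi x \<in> K} \<subseteq> C"
      using eX Psi_e by (auto simp: C_def)
  qed
  ultimately have "compactin (subtopology Z (e ` topspace X)) (e ` {x \<in> topspace X. psi x \<in> K})"
    by (auto simp: compactin_subtopology)
  then show ?thesis
    by (simp add: homeomorphic_map_compactness[OF hom])
qed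

lemma compactin_preimage_separating_sequence:
  fixes fs :: "nat \<Rightarrow> 'a \<Rightarrow> real"
  assumes "tychonoff_space X" and fs: "range fs \<subseteq> cube_index X"
    and sep: "\<And>x z. x \<in> topspace X \<Longrightarrow> z \<in> topspace (stone_cech_remainder X) \<Longrightarrow>
      \<exists>n. z (fs n) \<noteq> fs n x"
    and K: "compact K" "K \<subseteq> (\<lambda>x n. fs n x) ` topspace X"
  shows "compactin X {x \<in> topspace X. (\<lambda>n. fs n x) \<in> K}"
proof (rule compactin_preimage_through_compactification)
  show "embedding_map X (stone_cech X) (evaluation_map X)"
    using assms(1) by (rule embedding_map_stone_cech)
  have "continuous_map (stone_cech X) euclideanreal (\<lambda>z. z (fs n))" for n
    unfolding stone_cech_def
    by (rule continuous_map_from_subtopology, rule continuous_map_tychonoff_cube_coordinate)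
      (use fs in blast)
  then show "continuous_map (stone_cech X) euclidean (\<lambda>z n. z (fs n))"
    by (simp flip: euclidean_product_topology add: continuous_map_componentwise_UNIV)
  show "(\<lambda>n. evaluation_map X x (fs n)) = (\<lambda>n. fs n x)" for x
    using fs by (simp add: range_subsetD)
  show "(\<lambda>n. z (fs n)) \<notin> (\<lambda>x n. fs n x) ` topspace X"
    if "z \<in> topspace (stone_cech X) - evaluation_map X ` topspace X" for z
  proof
    assume "(\<lambda>n. z (fs n)) \<in> (\<lambda>x n. fs n x) ` topspace X"
    then obtain x where x: "x \<in> topspace X" "(\<lambda>n. z (fs n)) = (\<lambda>n. fs n x)"
      by blast
    have "z \<in> topspace (stone_cech_remainder X)"
      using that by (simp add: topspace_stone_cech_remainder)
    then obtain n where "z (fs n) \<noteq> fs n x"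
      using sep x(1) by blast
    then show False
      using fun_cong[OF x(2), of n] by simp
  qed
  show "compact_space (stone_cech X)"
    by (rule compact_space_stone_cech)
qed (use K in simp_all)

lemma sigma_compact_space_if_compact_preimages:
  assumes "\<And>K. compact K \<Longrightarrow> K \<subseteq> psi ` topspace X \<Longrightarrow> compactin X {x \<in> topspace X. psi x \<in> K}"
    and "countable \<K>" "\<And>K. K \<in> \<K> \<Longrightarrow> compact K \<and> K \<subseteq> psi ` topspace X"
    and "psi ` topspace X \<subseteq> \<Union>\<K>"
  shows "sigma_compact_space X"
  unfolding sigma_compact_space_def
proof (intro exI conjI)
  let ?\<F> = "(\<lambda>K. {x \<in> topspace X. psi x \<in> K}) ` \<K>"
  show "countable ?\<F>"
    using assms(2) by blast
  show "\<forall>K\<in>?\<F>. compactin X K"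
    using assms(1,3) by blast
  show "\<Union>?\<F> = topspace X"
    using assms(4) by blast
qed

section \<open>Concentrated sets under CH\<close>

lemma CH_imp_countable_initial_segments:
  assumes "CH"
  obtains r :: "real rel" where "\<And>s t. (s, t) \<in> r \<or> (t, s) \<in> r" "\<And>t. countable {s. (s, t) \<in> r}"
proof
  define r where "r = card_of (UNIV :: real set)"
  have "Well_order r" "Field r = UNIV"
    unfolding r_def by (rule card_of_Well_order, rule Field_card_of)
  then show "(s, t) \<in> r \<or> (t, s) \<in> r" for s t
    using wo_rel.TOTALS[of r] by (simp add: wo_rel_def)
  show "countable {s. (s, t) \<in> r}" for t
  proof -
    have less: "(card_of (underS r t), r) \<in> ordLess"
      unfolding r_def by (rule card_of_underS[OF card_of_Card_order]) (simp add: Field_card_of)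
    have "\<not> underS r t \<approx> (UNIV :: real set)"
    proof
      assume "underS r t \<approx> (UNIV :: real set)"
      then have "(card_of (underS r t), r) \<in> ordIso"
        unfolding r_def eqpoll_def using card_of_ordIso by blast
      with less show False
        using not_ordLess_ordIso by blast
    qed
    then have "countable (underS r t)"
      using assms by (auto simp: CH_def)
    moreover have "{s. (s, t) \<in> r} \<subseteq> insert t (underS r t)"
      by (auto simp: underS_def)
    ultimately show ?thesis
      by (meson countable_insert countable_subset)
  qed
qed

lemma open_sets_indexed_by_reals:
  obtains U :: "real \<Rightarrow> 'b::second_countable_topology set"
  where "\<And>t. open (U t)" "\<And>V. open V \<Longrightarrow> \<exists>t. U t = V"
proof -
  obtain \<B> :: "'b set set" where \<B>: "countable \<B>" "topological_basis \<B>"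
    using ex_countable_basis by blast
  obtain b where "b \<in> \<B>"
    using topological_basisE[OF \<B>(2) open_UNIV UNIV_I] .
  then have "\<B> \<noteq> {}"
    by blast
  then have range_\<B>: "range (from_nat_into \<B>) = \<B>"
    using \<B>(1) by (simp add: range_from_nat_into)
  obtain \<phi> :: "nat set \<Rightarrow> real" where \<phi>: "bij \<phi>"
    using nat_sets_eqpoll_reals unfolding eqpoll_def by blast
  define U where "U t = \<Union>(from_nat_into \<B> ` inv \<phi> t)" for t
  show ?thesis
  proof
    show "open (U t)" for t
      unfolding U_def using range_\<B> topological_basis_open[OF \<B>(2)] by (intro open_Union) auto
    show "\<exists>t. U t = V" if "open V" for V
    proof
      have "U (\<phi> {n. from_nat_into \<B> n \<subseteq> V}) = \<Union>(from_nat_into \<B> ` {n. from_nat_into \<B> n \<subseteq> V})"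
        using \<phi> by (simp add: U_def bij_is_inj)
      also have "\<dots> = V"
      proof
        show "V \<subseteq> \<Union>(from_nat_into \<B> ` {n. from_nat_into \<B> n \<subseteq> V})"
        proof
          fix x assume "x \<in> V"
          then obtain b where "b \<in> \<B>" "x \<in> b" "b \<subseteq> V"
            using topological_basisE[OF \<B>(2) \<open>open V\<close>] by blast
          moreover obtain n where "from_nat_into \<B> n = b"
            using range_\<B> \<open>b \<in> \<B>\<close> by (metis rangeE)
          ultimately show "x \<in> \<Union>(from_nat_into \<B> ` {n. from_nat_into \<B> n \<subseteq> V})"
            by blast
        qed
      qed blast
      finally show "U (\<phi> {n. from_nat_into \<B> n \<subseteq> V}) = V" .
    qed
  qed
qed

definition concentrated_on :: "'b::topological_space set \<Rightarrow> 'b set \<Rightarrow> bool" where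
  "concentrated_on A F \<longleftrightarrow> (\<forall>U. open U \<longrightarrow> F \<subseteq> U \<longrightarrow> countable (A - U))"

lemma CH_concentrated_subset:
  fixes S Z :: "'b::{second_countable_topology, t1_space} set"
  assumes "CH" "compact Z" "S \<subseteq> Z"
    and not_covered: "\<And>\<K>. countable \<K> \<Longrightarrow> (\<And>K. K \<in> \<K> \<Longrightarrow> compact K \<and> K \<subseteq> S) \<Longrightarrow> \<not> S \<subseteq> \<Union>\<K>"
  obtains A where "A \<subseteq> S" "uncountable A" "concentrated_on A (Z - S)"
proof -
  obtain r :: "real rel" where total: "\<And>s t. (s, t) \<in> r \<or> (t, s) \<in> r"
    and initial: "\<And>t. countable {s. (s, t) \<in> r}"
    using CH_imp_countable_initial_segments[OF \<open>CH\<close>] by blast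
  obtain U :: "real \<Rightarrow> 'b set" where U: "\<And>t. open (U t)" "\<And>V. open V \<Longrightarrow> \<exists>t. U t = V"
    using open_sets_indexed_by_reals by blast
  define good where "good s \<longleftrightarrow> Z - S \<subseteq> U s" for s
  \<comment> \<open>The \<open>t\<close>-th point of \<open>A\<close> is chosen inside all earlier open supersets of \<open>Z - S\<close>:
    their complements in \<open>Z\<close> are countably many compact subsets of \<open>S\<close>, which cannot cover \<open>S\<close>.\<close>
  have "\<exists>x\<in>S. \<forall>s. (s, t) \<in> r \<longrightarrow> good s \<longrightarrow> x \<in> U s" for t
  proof -
    let ?\<K> = "(\<lambda>s. Z - U s) ` {s. (s, t) \<in> r \<and> good s}"
    have "countable {s. (s, t) \<in> r \<and> good s}"
      by (rule countable_subset[OF _ initial[of t]]) blast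
    then have "countable ?\<K>"
      by (rule countable_image)
    moreover have "compact K \<and> K \<subseteq> S" if "K \<in> ?\<K>" for K
      using that \<open>compact Z\<close> U(1) by (auto simp: good_def compact_diff)
    ultimately have "\<not> S \<subseteq> \<Union>?\<K>"
      by (rule not_covered)
    then show ?thesis
      using \<open>S \<subseteq> Z\<close> by blast
  qed
  then obtain a where a: "\<And>t. a t \<in> S" "\<And>s t. (s, t) \<in> r \<Longrightarrow> good s \<Longrightarrow> a t \<in> U s"
    by metis
  have concentrated: "countable (range a - V)" if "open V" "Z - S \<subseteq> V" for V
  proof -
    obtain t where t: "U t = V"
      using U(2) \<open>open V\<close> by blast
    have "range a - V \<subseteq> a ` {s. (s, t) \<in> r}"
    proof
      fix y assume y: "y \<in> range a - V"
      then obtain s where s: "y = a s"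
        by blast
      have "(t, s) \<notin> r"
        using a(2)[of t s] t that(2) y s by (auto simp: good_def)
      then show "y \<in> a ` {s. (s, t) \<in> r}"
        using total s by blast
    qed
    moreover have "countable (a ` {s. (s, t) \<in> r})"
      using initial by (rule countable_image)
    ultimately show ?thesis
      by (rule countable_subset)
  qed
  have "uncountable (range a)"
  proof
    assume "countable (range a)"
    have "\<forall>x. \<exists>t. U t = - {x}"
      using U(2)[OF open_Compl[OF closed_singleton]] by blast
    then obtain c where c: "\<And>x. U (c x) = - {x}"
      by metis
    have "countable (\<Union>x\<in>range a. {s. (s, c x) \<in> r})"
      using \<open>countable (range a)\<close> initial by (intro countable_UN)
    then have "(\<Union>x\<in>range a. {s. (s, c x) \<in> r}) \<noteq> UNIV"
      using uncountable_UNIV_real by auto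
    then obtain t where "t \<notin> (\<Union>x\<in>range a. {s. (s, c x) \<in> r})"
      by blast
    then have "(c (a t), t) \<in> r"
      using total by blast
    moreover have "good (c (a t))"
      using a(1) c by (auto simp: good_def)
    ultimately have "a t \<in> U (c (a t))"
      by (rule a(2))
    then show False
      using c by simp
  qed
  show ?thesis
  proof (rule that)
    show "range a \<subseteq> S" "uncountable (range a)"
      using a(1) \<open>uncountable (range a)\<close> by auto
    show "concentrated_on (range a) (Z - S)"
      unfolding concentrated_on_def using concentrated by blast
  qed
qed

section \<open>Michael-type spaces\<close>

text \<open>Points of \<open>F\<close> keep their neighbourhoods from the ambient space, the remaining points
  of \<open>A\<close> are isolated; for \<open>F = \<rat>\<close> and \<open>A = -\<rat>\<close> this is the Michael line.\<close>

definition michael_space :: "'b::topological_space set \<Rightarrow> 'b set \<Rightarrow> 'b topology" where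
  "michael_space F A = topology (\<lambda>W. W \<subseteq> F \<union> A \<and>
     (\<forall>y\<in>W \<inter> F. \<exists>V. open V \<and> y \<in> V \<and> V \<inter> (F \<union> A) \<subseteq> W))"

lemma openin_michael_space:
  "openin (michael_space F A) W \<longleftrightarrow>
     W \<subseteq> F \<union> A \<and> (\<forall>y\<in>W \<inter> F. \<exists>V. open V \<and> y \<in> V \<and> V \<inter> (F \<union> A) \<subseteq> W)"
    (is "_ \<longleftrightarrow> ?open W")
proof -
  have "\<forall>S T. ?open S \<longrightarrow> ?open T \<longrightarrow> ?open (S \<inter> T)"
  proof (intro allI impI)
    fix S T assume S: "?open S" and T: "?open T"
    show "?open (S \<inter> T)"
    proof (intro conjI ballI)
      show "S \<inter> T \<subseteq> F \<union> A"
        using S by blast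
      fix y assume "y \<in> S \<inter> T \<inter> F"
      then obtain V1 V2 where "open V1" "y \<in> V1" "V1 \<inter> (F \<union> A) \<subseteq> S"
        and "open V2" "y \<in> V2" "V2 \<inter> (F \<union> A) \<subseteq> T"
        using S T by (meson IntD1 IntD2 IntI)
      then show "\<exists>V. open V \<and> y \<in> V \<and> V \<inter> (F \<union> A) \<subseteq> S \<inter> T"
        by (intro exI[of _ "V1 \<inter> V2"]) auto
    qed
  qed
  moreover have "\<forall>\<K>. (\<forall>W\<in>\<K>. ?open W) \<longrightarrow> ?open (\<Union>\<K>)"
  proof (intro allI impI)
    fix \<K> assume \<K>: "\<forall>W\<in>\<K>. ?open W"
    show "?open (\<Union>\<K>)"
    proof (intro conjI ballI)
      show "\<Union>\<K> \<subseteq> F \<union> A"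
        using \<K> by (simp add: Union_least)
      fix y assume y: "y \<in> \<Union>\<K> \<inter> F"
      then obtain W where W: "W \<in> \<K>" "y \<in> W"
        by blast
      have "\<forall>y\<in>W \<inter> F. \<exists>V. open V \<and> y \<in> V \<and> V \<inter> (F \<union> A) \<subseteq> W"
        using \<K> W(1) by simp
      moreover have "y \<in> W \<inter> F"
        using W(2) y by simp
      ultimately have "\<exists>V. open V \<and> y \<in> V \<and> V \<inter> (F \<union> A) \<subseteq> W"
        by (rule bspec)
      then obtain V where "open V" "y \<in> V" "V \<inter> (F \<union> A) \<subseteq> W"
        by blast
      then show "\<exists>V. open V \<and> y \<in> V \<and> V \<inter> (F \<union> A) \<subseteq> \<Union>\<K>"
        using W(1) by (intro exI[of _ V]) auto
    qed
  qed
  ultimately have "istopology ?open"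
    unfolding istopology_def by (rule conjI)
  then show ?thesis
    by (simp add: michael_space_def topology_inverse')
qed

lemma topspace_michael_space [simp]: "topspace (michael_space F A) = F \<union> A"
proof
  show "topspace (michael_space F A) \<subseteq> F \<union> A"
    using openin_topspace[of "michael_space F A"] unfolding openin_michael_space by (rule conjunct1)
  have "openin (michael_space F A) (F \<union> A)"
    unfolding openin_michael_space by (auto intro!: exI[of _ UNIV])
  then show "F \<union> A \<subseteq> topspace (michael_space F A)"
    by (rule openin_subset)
qed

lemma openin_michael_space_open:
  "open U \<Longrightarrow> openin (michael_space F A) (U \<inter> (F \<union> A))"
  by (auto simp: openin_michael_space)

lemma openin_michael_space_singleton:
  "a \<in> A \<Longrightarrow> a \<notin> F \<Longrightarrow> openin (michael_space F A) {a}"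
  by (auto simp: openin_michael_space)

lemma continuous_map_michael_space_id: "continuous_map (michael_space F A) euclidean id"
proof -
  have "{x \<in> F \<union> A. id x \<in> U} = U \<inter> (F \<union> A)" for U
    by auto
  then show ?thesis
    by (simp add: continuous_map_def openin_michael_space_open)
qed

lemma Hausdorff_space_michael_space:
  "Hausdorff_space (michael_space F (A :: 'b::metric_space set))"
  by (rule Hausdorff_space_injective_preimage[OF Hausdorff_space_euclidean
        continuous_map_michael_space_id]) simp

lemma regular_space_michael_space:
  "regular_space (michael_space F (A :: 'b::metric_space set))"
  unfolding regular_space_def topspace_michael_space
proof clarify
  fix C y
  assume C: "closedin (michael_space F A) C" and y: "y \<in> F \<union> A" "y \<notin> C"
  have "C \<subseteq> F \<union> A"
    using closedin_subset[OF C] by simp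
  show "\<exists>U V. openin (michael_space F A) U \<and> openin (michael_space F A) V \<and>
      y \<in> U \<and> C \<subseteq> V \<and> disjnt U V"
  proof (cases "y \<in> F")
    case True
    have "openin (michael_space F A) ((F \<union> A) - C)"
      using C by (simp add: closedin_def)
    then obtain V where "open V" "y \<in> V" "V \<inter> (F \<union> A) \<subseteq> (F \<union> A) - C"
      using True y unfolding openin_michael_space by blast
    moreover obtain e where "e > 0" "ball y e \<subseteq> V"
      using \<open>open V\<close> \<open>y \<in> V\<close> open_contains_ball by blast
    ultimately have "ball y e \<inter> C = {}"
      using \<open>C \<subseteq> F \<union> A\<close> by blast
    then have "e \<le> dist y c" if "c \<in> C" for c
      using that by (auto simp: disjoint_iff not_less)
    then have "C \<subseteq> - cball y (e/2) \<inter> (F \<union> A)"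
      using \<open>C \<subseteq> F \<union> A\<close> \<open>e > 0\<close> by fastforce
    moreover have "disjnt (ball y (e/2) \<inter> (F \<union> A)) (- cball y (e/2) \<inter> (F \<union> A))"
      by (auto simp: disjnt_iff)
    ultimately show ?thesis
      using \<open>e > 0\<close> y
      by (intro exI[of _ "ball y (e/2) \<inter> (F \<union> A)"] exI[of _ "- cball y (e/2) \<inter> (F \<union> A)"])
        (simp add: openin_michael_space_open open_Compl)
  next
    case False
    then show ?thesis
      using \<open>C \<subseteq> F \<union> A\<close> y
      by (intro exI[of _ "{y}"] exI[of _ "- {y} \<inter> (F \<union> A)"])
        (auto simp: openin_michael_space_singleton openin_michael_space_open open_Compl)
  qed
qed

lemma Lindelof_space_michael_space:
  fixes F :: "'b::second_countable_topology set"
  assumes "concentrated_on A F"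
  shows "Lindelof_space (michael_space F A)"
  unfolding Lindelof_space_def topspace_michael_space
proof (intro allI impI)
  fix \<U> assume "(\<forall>U\<in>\<U>. openin (michael_space F A) U) \<and> \<Union>\<U> = F \<union> A"
  then have \<U>: "\<forall>U\<in>\<U>. openin (michael_space F A) U" "F \<union> A \<subseteq> \<Union>\<U>" "\<Union>\<U> \<subseteq> F \<union> A"
    by simp_all
  have "\<exists>W V. W \<in> \<U> \<and> open V \<and> y \<in> V \<and> V \<inter> (F \<union> A) \<subseteq> W" if y: "y \<in> F" for y
  proof -
    obtain U where U: "U \<in> \<U>" "y \<in> U"
      using \<U>(2) y by blast
    then have "\<forall>y\<in>U \<inter> F. \<exists>V. open V \<and> y \<in> V \<and> V \<inter> (F \<union> A) \<subseteq> U"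
      using \<U>(1) by (simp add: openin_michael_space)
    then have "\<exists>V. open V \<and> y \<in> V \<and> V \<inter> (F \<union> A) \<subseteq> U"
      using U(2) y by blast
    then show ?thesis
      using U(1) by blast
  qed
  then obtain W V where WV: "\<And>y. y \<in> F \<Longrightarrow> W y \<in> \<U> \<and> open (V y) \<and> y \<in> V y \<and> V y \<inter> (F \<union> A) \<subseteq> W y"
    by metis
  have "open S" if "S \<in> V ` F" for S
    using that WV by blast
  then obtain \<W> where \<W>: "\<W> \<subseteq> V ` F" "countable \<W>" "\<Union>\<W> = \<Union>(V ` F)"
    by (rule Lindelof)
  have "\<exists>F'. countable F' \<and> F' \<subseteq> F \<and> \<W> = V ` F'"
    using countable_subset_image[THEN iffD1, OF conjI[OF \<W>(2,1)]] .
  then obtain F' where F': "F' \<subseteq> F" "countable F'" "\<Union>(V ` F') = \<Union>(V ` F)"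
    using \<W>(3) by blast
  have "open (\<Union>(V ` F))"
    by (rule open_UN) (use WV in blast)
  moreover have "F \<subseteq> \<Union>(V ` F)"
    using WV by blast
  ultimately have countable_rest: "countable (A - \<Union>(V ` F))"
    using assms by (simp add: concentrated_on_def)
  have "\<forall>a\<in>A - \<Union>(V ` F). \<exists>U\<in>\<U>. a \<in> U"
    using \<U>(2) by blast
  then obtain U where U: "\<And>a. a \<in> A - \<Union>(V ` F) \<Longrightarrow> U a \<in> \<U> \<and> a \<in> U a"
    by metis
  define \<V> where "\<V> = W ` F' \<union> U ` (A - \<Union>(V ` F))"
  have "countable \<V>"
    using F'(2) countable_rest by (simp add: \<V>_def)
  moreover have "\<V> \<subseteq> \<U>"
    using WV F'(1) U unfolding \<V>_def by blast
  moreover have "F \<union> A \<subseteq> \<Union>\<V>"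
  proof
    fix y assume y: "y \<in> F \<union> A"
    show "y \<in> \<Union>\<V>"
    proof (cases "y \<in> \<Union>(V ` F)")
      case True
      then obtain y' where "y' \<in> F'" "y \<in> V y'"
        using F'(3) by blast
      then have "y \<in> W y'"
        using WV F'(1) y by blast
      then show ?thesis
        using \<open>y' \<in> F'\<close> by (auto simp: \<V>_def)
    next
      case False
      then have "y \<in> A - \<Union>(V ` F)"
        using WV y by blast
      then show ?thesis
        using U unfolding \<V>_def by blast
    qed
  qed
  ultimately show "\<exists>\<V>. countable \<V> \<and> \<V> \<subseteq> \<U> \<and> \<Union>\<V> = F \<union> A"
    using \<U>(3) by (intro exI[of _ \<V>] conjI) auto
qed

lemma tychonoff_space_michael_space:
  fixes F :: "'b::{metric_space, second_countable_topology} set"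
  assumes "concentrated_on A F"
  shows "tychonoff_space (michael_space F A)"
proof -
  have "normal_space (michael_space F A)"
    by (rule regular_Lindelof_imp_normal_space[OF regular_space_michael_space
          Lindelof_space_michael_space[OF assms]])
  then show ?thesis
    by (simp add: tychonoff_space_def normal_imp_completely_regular_space Hausdorff_space_michael_space)
qed

lemma not_Lindelof_prod_michael_space:
  fixes psi :: "'a \<Rightarrow> 'b::metric_space"
  assumes psi: "continuous_map X euclidean psi"
    and "A \<subseteq> psi ` topspace X" "F \<inter> psi ` topspace X = {}" "uncountable A"
  shows "\<not> Lindelof_space (prod_topology X (michael_space F A))"
proof
  define P where "P = prod_topology X (michael_space F A)"
  define G where "G = {z \<in> topspace P. psi (fst z) = snd z}"
  define \<U> where "\<U> = insert (topspace P - G) ((\<lambda>a. topspace X \<times> {a}) ` A)"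
  assume "Lindelof_space (prod_topology X (michael_space F A))"
  have "closedin P G"
    unfolding G_def P_def
    by (intro closedin_continuous_maps_eq[OF Hausdorff_space_euclidean]
        continuous_map_compose[OF continuous_map_fst psi, unfolded o_def]
        continuous_map_compose[OF continuous_map_snd continuous_map_michael_space_id, unfolded o_def id_def])
  then have "openin P (topspace P - G)"
    by (simp add: closedin_def)
  moreover have "openin P (topspace X \<times> {a})" if "a \<in> A" for a
  proof -
    have "a \<notin> F"
      using that assms(2,3) by blast
    with that have "openin (michael_space F A) {a}"
      by (rule openin_michael_space_singleton)
    then show ?thesis
      by (simp add: P_def openin_prod_Times_iff)
  qed
  ultimately have "\<forall>U\<in>\<U>. openin P U"
    by (auto simp: \<U>_def)
  moreover have "topspace P \<subseteq> \<Union>\<U>"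
  proof
    fix z assume z: "z \<in> topspace P"
    show "z \<in> \<Union>\<U>"
    proof (cases "z \<in> G")
      case True
      then have "snd z \<in> psi ` topspace X" "snd z \<in> F \<union> A" "fst z \<in> topspace X"
        by (auto simp: G_def P_def)
      then have "z \<in> topspace X \<times> {snd z}" "snd z \<in> A"
        using assms(3) by (auto simp: mem_Times_iff)
      then show ?thesis
        by (auto simp: \<U>_def)
    qed (use z in \<open>auto simp: \<U>_def\<close>)
  qed
  moreover have "Lindelof_space P"
    using \<open>Lindelof_space (prod_topology X (michael_space F A))\<close> by (simp add: P_def)
  ultimately have "\<exists>\<V>. countable \<V> \<and> \<V> \<subseteq> \<U> \<and> topspace P \<subseteq> \<Union>\<V>"
    by (simp add: Lindelof_space_alt)
  then obtain \<V> where \<V>: "countable \<V>" "\<V> \<subseteq> \<U>" "topspace P \<subseteq> \<Union>\<V>"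
    by blast
  have "A \<subseteq> (\<Union>V\<in>\<V> - {topspace P - G}. snd ` V)"
  proof
    fix a assume "a \<in> A"
    then obtain x where x: "x \<in> topspace X" "psi x = a"
      using assms(2) by blast
    then have "(x, a) \<in> G"
      using \<open>a \<in> A\<close> by (auto simp: G_def P_def)
    moreover have "G \<subseteq> topspace P"
      by (auto simp: G_def)
    ultimately obtain V where "V \<in> \<V>" "(x, a) \<in> V"
      using \<V>(3) by blast
    moreover have "V \<noteq> topspace P - G"
      using \<open>(x, a) \<in> G\<close> \<open>(x, a) \<in> V\<close> by blast
    ultimately show "a \<in> (\<Union>V\<in>\<V> - {topspace P - G}. snd ` V)"
      by force
  qed
  moreover have "countable (snd ` V)" if V: "V \<in> \<V> - {topspace P - G}" for V
  proof -
    obtain b where "V = topspace X \<times> {b}"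
      using \<V>(2) V unfolding \<U>_def by blast
    then have "snd ` V \<subseteq> {b}"
      by auto
    then show ?thesis
      by (rule countable_subset) simp
  qed
  then have "countable (\<Union>V\<in>\<V> - {topspace P - G}. snd ` V)"
    using \<V>(1) by (intro countable_UN) auto
  ultimately have "countable A"
    by (rule countable_subset)
  with \<open>uncountable A\<close> show False
    by contradiction
qed

section \<open>Subspaces of the Hilbert cube\<close>

lemma inj_on_unit_sequence_code:
  "inj_on (\<lambda>z. range (\<lambda>n. \<lambda>_::'a. real n + z n / 2)) (\<Pi>\<^sub>E n\<in>UNIV. {0..1})"
proof (rule inj_onI, rule ext)
  fix z w n
  assume z: "z \<in> (\<Pi>\<^sub>E n\<in>UNIV. {0..1::real})" and w: "w \<in> (\<Pi>\<^sub>E n\<in>UNIV. {0..1::real})"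
    and eq: "range (\<lambda>n. \<lambda>_::'a. real n + z n / 2) = range (\<lambda>n. \<lambda>_::'a. real n + w n / 2)"
  have "(\<lambda>_::'a. real n + z n / 2) \<in> range (\<lambda>n. \<lambda>_::'a. real n + w n / 2)"
    unfolding eq[symmetric] by blast
  then obtain m where "(\<lambda>_::'a. real n + z n / 2) = (\<lambda>_::'a. real m + w m / 2)"
    by blast
  then have m: "real n + z n / 2 = real m + w m / 2"
    by (rule fun_cong)
  have "0 \<le> z n" "z n \<le> 1" "0 \<le> w m" "w m \<le> 1"
    using z w by auto
  \<comment> \<open>the offsets lie in \<open>[0, 1/2]\<close>, so the integer parts agree\<close>
  then have "\<not> n < m" "\<not> m < n"
    using m by (auto simp: nat_less_real_le)
  then show "z n = w n"
    using m by (simp add: nat_neq_iff[symmetric])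
qed

lemma compact_unit_sequences: "compact (\<Pi>\<^sub>E n\<in>UNIV. {0..1::real})"
proof -
  have "compactin (product_topology (\<lambda>_. euclideanreal) UNIV) (\<Pi>\<^sub>E n\<in>UNIV. {0..1::real})"
    by (simp add: compactin_PiE)
  then show ?thesis
    by (simp add: euclidean_product_topology)
qed

lemma productively_Lindelof_imp_Lindelof_prod_unit_sequences:
  fixes X :: "'a topology" and Y :: "(nat \<Rightarrow> real) topology"
  assumes "productively_Lindelof X" "tychonoff_space Y" "Lindelof_space Y"
    and "topspace Y \<subseteq> (\<Pi>\<^sub>E n\<in>UNIV. {0..1})"
  shows "Lindelof_space (prod_topology X Y)"
proof -
  have "inj_on (\<lambda>z. range (\<lambda>n. \<lambda>_::'a. real n + z n / 2)) (topspace Y)"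
    using assms(4) by (rule inj_on_subset[OF inj_on_unit_sequence_code])
  then show ?thesis
    by (rule productively_Lindelof_imp_Lindelof_prod[OF assms(1-3)])
qed

lemma co_analytic_perfect_map_to_unit_sequences:
  fixes X :: "'a topology"
  assumes "tychonoff_space X" "productively_Lindelof X" "co_analytic_space X"
  obtains psi :: "'a \<Rightarrow> nat \<Rightarrow> real"
  where "continuous_map X euclidean psi" "psi ` topspace X \<subseteq> (\<Pi>\<^sub>E n\<in>UNIV. {0..1})"
    "\<And>K. compact K \<Longrightarrow> K \<subseteq> psi ` topspace X \<Longrightarrow> compactin X {x \<in> topspace X. psi x \<in> K}"
proof -
  obtain fs :: "nat \<Rightarrow> 'a \<Rightarrow> real" where fs: "range fs \<subseteq> cube_index X"
    and sep: "\<And>x z. x \<in> topspace X \<Longrightarrow> z \<in> topspace (stone_cech_remainder X) \<Longrightarrow>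
      \<exists>n. z (fs n) \<noteq> fs n x"
    using co_analytic_separating_sequence[OF assms(2,3)] by blast
  have "continuous_map X (product_topology (\<lambda>_. euclideanreal) UNIV) (\<lambda>x n. fs n x)"
    unfolding continuous_map_componentwise_UNIV
    using cube_indexD(1)[OF range_subsetD[OF fs]] by simp
  then have "continuous_map X euclidean (\<lambda>x n. fs n x)"
    by (simp add: euclidean_product_topology)
  moreover have "(\<lambda>x n. fs n x) ` topspace X \<subseteq> (\<Pi>\<^sub>E n\<in>UNIV. {0..1})"
    using cube_indexD(2)[OF range_subsetD[OF fs]] by auto
  ultimately show ?thesis
    using that compactin_preimage_separating_sequence[OF assms(1) fs sep] by blast
qed

theorem theorem2p4:
  fixes X :: "'a topology"
  assumes "CH"
    and "tychonoff_space X"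
    and "productively_Lindelof X"
    and "co_analytic_space X"
    and "nowhere_locally_compact X"
  shows "sigma_compact_space X"
proof (rule ccontr)
  assume not_sigma: "\<not> sigma_compact_space X"
  obtain psi :: "'a \<Rightarrow> nat \<Rightarrow> real" where psi: "continuous_map X euclidean psi"
    "psi ` topspace X \<subseteq> (\<Pi>\<^sub>E n\<in>UNIV. {0..1})"
    "\<And>K. compact K \<Longrightarrow> K \<subseteq> psi ` topspace X \<Longrightarrow> compactin X {x \<in> topspace X. psi x \<in> K}"
    using co_analytic_perfect_map_to_unit_sequences[OF assms(2-4)] by blast
  have not_covered: "\<not> psi ` topspace X \<subseteq> \<Union>\<K>"
    if "countable \<K>" "\<And>K. K \<in> \<K> \<Longrightarrow> compact K \<and> K \<subseteq> psi ` topspace X" for \<K>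
    using sigma_compact_space_if_compact_preimages[OF psi(3) that] not_sigma by blast
  obtain A where A: "A \<subseteq> psi ` topspace X" "uncountable A"
    "concentrated_on A ((\<Pi>\<^sub>E n\<in>UNIV. {0..1}) - psi ` topspace X)"
    using CH_concentrated_subset[OF assms(1) compact_unit_sequences psi(2) not_covered] by blast
  define Y where "Y = michael_space ((\<Pi>\<^sub>E n\<in>UNIV. {0..1}) - psi ` topspace X) A"
  have "Lindelof_space (prod_topology X Y)"
    unfolding Y_def
    by (rule productively_Lindelof_imp_Lindelof_prod_unit_sequences[OF assms(3)
          tychonoff_space_michael_space[OF A(3)] Lindelof_space_michael_space[OF A(3)]])
      (use A(1) psi(2) in auto)
  moreover have "\<not> Lindelof_space (prod_topology X Y)"
    unfolding Y_def using A(1,2) by (intro not_Lindelof_prod_michael_space[OF psi(1)]) auto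
  ultimately show False
    by contradiction
qed

end
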